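(* Let $T$ be a positive integer, let $N=(N_l)_{0\le l\le T}$ satisfy $N_0=0$ with increments $N_{l+1}-N_l$ independent Poisson random variables with parameters $\gamma_l\ge0$, let $\mathfrak{F}=(\mathfrak{F}_k)$ be the natural augmented filtration of $N$, $I_k=(-1)^{N_k}$ (so $I_0=1$), and $u_r=\frac12(1+e^{-2\gamma_{r-1}})$, $v_r=\frac12(1-e^{-2\gamma_{r-1}})$ for $1\le r\le T$. Define the events $$\Omega_{T+1,T+1}=\{I_0=1,\dots,I_T=1\},$$ $$\Omega_{l,T+1}=\{I_0=\dots=I_{l-1}=1,\ I_l=\dots=I_T=-1\},\ 1\le l\le T,$$ $$\Omega_{l,m}=\{I_0=\dots=I_{l-1}=1,\ I_l=\dots=I_{m-1}=-1,\ I_m=1\},\ 1\le l<m\le T,$$ and $\mathcal{I}=\{(l,m);1\le l<m\le T\}\cup\{(l,T+1);1\le l\le T+1\}$. Then for every $0\le k\le T$ and $(l,m)\in\mathcal{I}$, the conditional probabilities $\mathbb{Q}_k[\Omega_{\lambda,\mu}]=\mathbb{Q}[\Omega_{\lambda,\mu}\,|\,\mathfrak{F}_k]$, $(\lambda,\mu)\in\mathcal{I}$, are constant on $\Omega_{l,m}$, with values: for $1\le\lambda<\mu\le T$, $$\mathbb{Q}_k[\Omega_{\lambda,\mu}](\Omega_{l,m})=\Big(\mathbf{1}_{k<l\wedge\lambda}+\mathbf{1}_{k\ge l\wedge\lambda}\mathbf{1}_{l=\lambda}\big(\mathbf{1}_{k<m\wedge\mu}+\mathbf{1}_{k\ge m\wedge\mu}\mathbf{1}_{m=\mu}\big)\Big)\times\Big(\mathbf{1}_{k\ge\mu}+\mathbf{1}_{\lambda\le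 k<\mu}\Big(\prod_{r=k+1}^{\mu-1}u_r\Big)v_\mu+\mathbf{1}_{k<\lambda}\Big(\prod_{r=k+1}^{\lambda-1}u_r\Big)v_\lambda\Big(\prod_{r=\lambda+1}^{\mu-1}u_r\Big)v_\mu\Big);$$ for $1\le\lambda\le T$, $$\mathbb{Q}_k[\Omega_{\lambda,T+1}](\Omega_{l,m})=\big(\mathbf{1}_{k<l\wedge\lambda}+\mathbf{1}_{k\ge l\wedge\lambda}\mathbf{1}_{l=\lambda}\mathbf{1}_{k<m}\big)\times\Big(\mathbf{1}_{k\ge\lambda}\prod_{r=k+1}^{T}u_r+\mathbf{1}_{k<\lambda}\Big(\prod_{r=k+1}^{\lambda-1}u_r\Big)v_\lambda\Big(\prod_{r=\lambda+1}^{T}u_r\Big)\Big);$$ and $$\mathbb{Q}_k[\Omega_{T+1,T+1}](\Omega_{l,m})=\mathbf{1}_{k<l}\prod_{r=k+1}^{T}u_r.$$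
   Context: For a random variable constant on an event $A$, its value on $A$ is denoted by evaluation at $A$. *)

theory Defs
  imports "HOL-Probability.Probability" "HOL-Probability.Conditional_Expectation"
begin

text \<open>Poisson law with parameter g \<ge> 0 (g = 0 allowed: point mass at 0, since 0^0 = 1).\<close>
definition poisson_prob :: "real \<Rightarrow> nat \<Rightarrow> real" where
  "poisson_prob g j = g ^ j / fact j * exp (- g)"

definition nat_aug_filtration :: "'a measure \<Rightarrow> (nat \<Rightarrow> 'a \<Rightarrow> int) \<Rightarrow> nat \<Rightarrow> 'a measure" where
  "nat_aug_filtration M N k =
     sigma (space M) ((\<Union>j\<in>{0..k}. {N j -` A \<inter> space M | A. True}) \<union> null_sets M)"

definition u_coef :: "(nat \<Rightarrow> real) \<Rightarrow> nat \<Rightarrow> real" where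
  "u_coef \<gamma> r = (1 + exp (- 2 * \<gamma> (r - 1))) / 2"

definition v_coef :: "(nat \<Rightarrow> real) \<Rightarrow> nat \<Rightarrow> real" where
  "v_coef \<gamma> r = (1 - exp (- 2 * \<gamma> (r - 1))) / 2"

definition Omega_ev :: "'a set \<Rightarrow> (nat \<Rightarrow> 'a \<Rightarrow> real) \<Rightarrow> nat \<Rightarrow> nat \<Rightarrow> nat \<Rightarrow> 'a set" where
  "Omega_ev S I T l m =
    (if l = T + 1 \<and> m = T + 1 then {\<omega>\<in>S. \<forall>j\<le>T. I j \<omega> = 1}
     else if m = T + 1 then
       {\<omega>\<in>S. (\<forall>j<l. I j \<omega> = 1) \<and> (\<forall>j. l \<le> j \<and> j \<le> T \<longrightarrow> I j \<omega> = -1)}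
     else
       {\<omega>\<in>S. (\<forall>j<l. I j \<omega> = 1) \<and> (\<forall>j. l \<le> j \<and> j < m \<longrightarrow> I j \<omega> = -1) \<and> I m \<omega> = 1})"

definition index_set :: "nat \<Rightarrow> (nat \<times> nat) set" where
  "index_set T = {(l, m). 1 \<le> l \<and> l < m \<and> m \<le> T} \<union> {(l, m). 1 \<le> l \<and> l \<le> T + 1 \<and> m = T + 1}"

definition ind :: "bool \<Rightarrow> real" where
  "ind b = (if b then 1 else 0)"

end

theory Submission
  imports Defs
begin

text \<open>Since I(j+1) = I(j) * (-1)^(N(j+1) - N(j)), the event that I follows a prescribed
  sign path c up to time n is the intersection of the event that it follows c up to time
  min n k, which lies in F_k, with an event on the parities of the increments after time k.
  The latter is independent of the increments before k, hence of F_k (augmenting by null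
  sets does not affect independence), and since a Poisson variable with parameter g is even
  with probability (1 + exp (-2 g)) / 2, its probability is a product of the u_r and v_r.
  So the conditional probability of a path event is the indicator of the path up to time k
  times that product. Each Omega_(lambda,mu) is a path event for the sign pattern that is -1
  exactly on [lambda, mu), and on Omega_(l,m) the indicator reduces to whether the two
  patterns agree up to time k.\<close>

lemma poisson_prob_sums: "poisson_prob g sums 1"
proof -
  have "(\<lambda>n. g ^ n /\<^sub>R fact n * exp (- g)) sums (exp g * exp (- g))"
    by (rule sums_mult2[OF exp_converges])
  moreover have "(\<lambda>n. g ^ n /\<^sub>R fact n * exp (- g)) = poisson_prob g"
    by (simp add: fun_eq_iff poisson_prob_def divide_inverse ac_simps)
  ultimately show ?thesis
    by (simp add: exp_minus_inverse)
qed

lemma poisson_prob_alternating_sums: "(\<lambda>n. (-1) ^ n * poisson_prob g n) sums exp (- 2 * g)"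
proof -
  have "(\<lambda>n. (- g) ^ n /\<^sub>R fact n * exp (- g)) sums (exp (- g) * exp (- g))"
    by (rule sums_mult2[OF exp_converges])
  moreover have "exp (- g) * exp (- g) = exp (- 2 * g)"
    by (simp flip: exp_add)
  ultimately show ?thesis
    by (simp add: poisson_prob_def power_minus[of g] divide_inverse ac_simps)
qed

lemma poisson_prob_even_sums:
  "(\<lambda>n. if even n then poisson_prob g n else 0) sums ((1 + exp (- 2 * g)) / 2)"
proof -
  have "(\<lambda>n. (poisson_prob g n + (-1) ^ n * poisson_prob g n) / 2) sums ((1 + exp (- 2 * g)) / 2)"
    by (intro sums_divide sums_add poisson_prob_sums poisson_prob_alternating_sums)
  moreover have "(\<lambda>n. (poisson_prob g n + (-1) ^ n * poisson_prob g n) / 2) =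
      (\<lambda>n. if even n then poisson_prob g n else 0)"
    by (simp add: fun_eq_iff)
  ultimately show ?thesis by simp
qed

lemma poisson_prob_odd_sums:
  "(\<lambda>n. if odd n then poisson_prob g n else 0) sums ((1 - exp (- 2 * g)) / 2)"
proof -
  have "(\<lambda>n. (poisson_prob g n - (-1) ^ n * poisson_prob g n) / 2) sums ((1 - exp (- 2 * g)) / 2)"
    by (intro sums_divide sums_diff poisson_prob_sums poisson_prob_alternating_sums)
  moreover have "(\<lambda>n. (poisson_prob g n - (-1) ^ n * poisson_prob g n) / 2) =
      (\<lambda>n. if odd n then poisson_prob g n else 0)"
    by (simp add: fun_eq_iff)
  ultimately show ?thesis by simp
qed

lemma Int_stable_sigma_sets:
  assumes "A \<subseteq> Pow S"
  shows "Int_stable (sigma_sets S A)"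
proof -
  interpret sigma_algebra S "sigma_sets S A"
    using assms by (rule sigma_algebra_sigma_sets)
  show ?thesis
    by (auto simp: Int_stable_def)
qed

context prob_space
begin

lemma sums_prob_nat_values:
  fixes X :: "'a \<Rightarrow> int"
  assumes X: "X \<in> measurable M (count_space UNIV)"
  shows "(\<lambda>n. prob {\<omega>\<in>space M. X \<omega> = int n \<and> P n}) sums prob {\<omega>\<in>space M. \<exists>n. X \<omega> = int n \<and> P n}"
proof -
  have "(\<lambda>n. prob {\<omega>\<in>space M. X \<omega> = int n \<and> P n}) sums prob (\<Union>n. {\<omega>\<in>space M. X \<omega> = int n \<and> P n})"
    using X by (intro finite_measure_UNION) (auto simp: disjoint_family_on_def)
  moreover have "(\<Union>n. {\<omega>\<in>space M. X \<omega> = int n \<and> P n}) = {\<omega>\<in>space M. \<exists>n. X \<omega> = int n \<and> P n}"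
    by blast
  ultimately show ?thesis by simp
qed

lemma prob_sign_poisson:
  fixes X :: "'a \<Rightarrow> int"
  assumes X: "X \<in> measurable M (count_space UNIV)"
    and law: "\<And>n. prob {\<omega>\<in>space M. X \<omega> = int n} = poisson_prob g n"
  shows "prob {\<omega>\<in>space M. (-1::real) powi X \<omega> = 1} = (1 + exp (- 2 * g)) / 2"
    and "prob {\<omega>\<in>space M. (-1::real) powi X \<omega> = -1} = (1 - exp (- 2 * g)) / 2"
proof -
  have sums_law: "(\<lambda>n. if P n then poisson_prob g n else 0) sums prob {\<omega>\<in>space M. \<exists>n. X \<omega> = int n \<and> P n}"
    for P
  proof -
    have "prob {\<omega>\<in>space M. X \<omega> = int n \<and> P n} = (if P n then poisson_prob g n else 0)" for n
      using law[of n] by simp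
    then show ?thesis using sums_prob_nat_values[OF X, of P] by simp
  qed
  have "prob {\<omega>\<in>space M. \<exists>n. X \<omega> = int n} = 1"
    using sums_law[of "\<lambda>_. True"] poisson_prob_sums by (simp add: sums_unique2)
  then have nonneg: "AE \<omega> in M. X \<omega> \<ge> 0"
    by (auto dest!: AE_prob_1)
  have prob_sign: "prob {\<omega>\<in>space M. (-1::real) powi X \<omega> = s} = prob {\<omega>\<in>space M. \<exists>n. X \<omega> = int n \<and> P n}"
    if "\<And>n. (-1::real) ^ n = s \<longleftrightarrow> P n" for s P
  proof (rule measure_eq_AE)
    show "AE \<omega> in M. \<omega> \<in> {\<omega>\<in>space M. (-1::real) powi X \<omega> = s} \<longleftrightarrow>
        \<omega> \<in> {\<omega>\<in>space M. \<exists>n. X \<omega> = int n \<and> P n}"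
      using nonneg by eventually_elim (auto simp flip: that dest!: zero_le_imp_eq_int)
  qed (use X in measurable)
  have "prob {\<omega>\<in>space M. (-1::real) powi X \<omega> = 1} = prob {\<omega>\<in>space M. \<exists>n. X \<omega> = int n \<and> even n}"
    by (rule prob_sign) (simp add: minus_one_power_iff)
  then show "prob {\<omega>\<in>space M. (-1::real) powi X \<omega> = 1} = (1 + exp (- 2 * g)) / 2"
    using sums_unique2[OF sums_law[of even] poisson_prob_even_sums] by simp
  have "prob {\<omega>\<in>space M. (-1::real) powi X \<omega> = -1} = prob {\<omega>\<in>space M. \<exists>n. X \<omega> = int n \<and> odd n}"
    by (rule prob_sign) (simp add: minus_one_power_iff)
  then show "prob {\<omega>\<in>space M. (-1::real) powi X \<omega> = -1} = (1 - exp (- 2 * g)) / 2"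
    using sums_unique2[OF sums_law[of odd] poisson_prob_odd_sums] by simp
qed

lemma indep_set_null_sets:
  assumes indep: "indep_set A B" and "Int_stable A" "Int_stable B"
  shows "indep_set (sigma_sets (space M) (A \<union> null_sets M)) (sigma_sets (space M) B)"
proof (rule indep_set_sigma_sets)
  have A: "A \<subseteq> events" and B: "B \<subseteq> events"
    using indep by (auto dest: indep_setD_ev1 indep_setD_ev2)
  have "prob (a \<inter> b) = prob a * prob b" if "a \<in> null_sets M" "b \<in> B" for a b
    using that B null_set_Int2[of a M b] by (auto simp: measure_eq_0_null_sets Int_commute)
  then show "indep_set (A \<union> null_sets M) B"
    using indep A B unfolding indep_sets2_eq by auto
  show "Int_stable (A \<union> null_sets M)"
    using \<open>Int_stable A\<close> A by (auto simp: Int_stable_def null_set_Int1 null_set_Int2)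
qed fact

lemma real_cond_exp_indicator_Int_indep:
  assumes F: "subalgebra M F" and S: "S \<in> sets F" and indep: "indep_set (sets F) B" and R: "R \<in> B"
  shows "AE x in M. real_cond_exp M F (indicator (S \<inter> R)) x = indicator S x * prob R"
proof -
  interpret finite_measure_subalgebra M F
    using F by unfold_locales
  have F_events: "sets F \<subseteq> events"
    using F by (simp add: subalgebra_def)
  have R_event: "R \<in> events"
    using indep R by (auto dest: indep_setD_ev2)
  show ?thesis
  proof (rule real_cond_exp_charact)
    fix A assume A: "A \<in> sets F"
    then have "A \<inter> S \<in> sets F" using S by auto
    then have "prob (A \<inter> S \<inter> R) = prob (A \<inter> S) * prob R"
      by (rule indep_setD[OF indep _ R])
    then show "(\<integral>x\<in>A. indicator (S \<inter> R) x \<partial>M) = (\<integral>x\<in>A. indicator S x * prob R \<partial>M)"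
      using A S R_event F_events sets.sets_into_space
      by (auto simp: set_lebesgue_integral_def indicator_inter_arith[symmetric] Int_assoc Int_absorb2)
  qed (use S R_event F_events in \<open>auto simp: emeasure_eq_measure\<close>)
qed

end

text \<open>The probability that, from time k on, the sign path keeps following c up to time n:
  at step j it keeps its sign with probability u_j and flips it with probability v_j.\<close>

definition path_weight :: "(nat \<Rightarrow> real) \<Rightarrow> nat \<Rightarrow> nat \<Rightarrow> (nat \<Rightarrow> real) \<Rightarrow> real" where
  "path_weight \<gamma> k n c = (\<Prod>j\<in>{k+1..n}. if c j = c (j - 1) then u_coef \<gamma> j else v_coef \<gamma> j)"

locale poisson_increments = prob_space M for M :: "'a measure" +
  fixes N :: "nat \<Rightarrow> 'a \<Rightarrow> int" and \<gamma> :: "nat \<Rightarrow> real" and T :: nat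
  assumes N_measurable: "\<And>j. j \<le> T \<Longrightarrow> N j \<in> measurable M (count_space UNIV)"
    and N_0: "\<And>\<omega>. \<omega> \<in> space M \<Longrightarrow> N 0 \<omega> = 0"
    and indep_increments: "indep_vars (\<lambda>_. count_space UNIV) (\<lambda>j \<omega>. N (Suc j) \<omega> - N j \<omega>) {0..<T}"
    and increment_poisson: "\<And>j n. j < T \<Longrightarrow>
      prob {\<omega> \<in> space M. N (Suc j) \<omega> - N j \<omega> = int n} = poisson_prob (\<gamma> j) n"
begin

abbreviation increment :: "nat \<Rightarrow> 'a \<Rightarrow> int" where
  "increment j \<omega> \<equiv> N (Suc j) \<omega> - N j \<omega>"

abbreviation I :: "nat \<Rightarrow> 'a \<Rightarrow> real" where
  "I j \<omega> \<equiv> (-1) powi N j \<omega>"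

abbreviation F :: "nat \<Rightarrow> 'a measure" where
  "F k \<equiv> nat_aug_filtration M N k"

definition increment_events :: "nat \<Rightarrow> 'a set set" where
  "increment_events i = {increment i -` A \<inter> space M | A. True}"

definition past :: "nat \<Rightarrow> 'a set set" where
  "past k = sigma_sets (space M) (\<Union>i<k. increment_events i)"

definition future :: "nat \<Rightarrow> 'a set set" where
  "future k = sigma_sets (space M) (\<Union>i\<in>{k..<T}. increment_events i)"

lemma increment_measurable: "i < T \<Longrightarrow> increment i \<in> measurable M (count_space UNIV)"
  using indep_increments by (auto simp: indep_vars_def)

lemma increment_events_subset: "increment_events i \<subseteq> Pow (space M)"
  by (auto simp: increment_events_def)

lemma increment_events_Int_stable: "Int_stable (increment_events i)"
proof (rule Int_stableI)
  fix X Y assume "X \<in> increment_events i" "Y \<in> increment_events i"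
  then obtain A B where "X = increment i -` A \<inter> space M" "Y = increment i -` B \<inter> space M"
    by (auto simp: increment_events_def)
  then have "X \<inter> Y = increment i -` (A \<inter> B) \<inter> space M"
    by auto
  then show "X \<inter> Y \<in> increment_events i"
    unfolding increment_events_def by blast
qed

lemma indep_past_future:
  assumes "k \<le> T"
  shows "indep_set (past k) (future k)"
proof -
  have "indep_sets increment_events {0..<T}"
    using indep_increments by (simp add: indep_vars_def2 increment_events_def[abs_def])
  moreover have "(\<Union>b. case_bool {..<k} {k..<T} b) = {0..<T}"
    using assms by (auto simp: UNIV_bool)
  ultimately have "indep_sets (\<lambda>b. sigma_sets (space M)
      (\<Union>i\<in>case_bool {..<k} {k..<T} b. increment_events i)) UNIV"
    by (intro indep_sets_collect_sigma increment_events_Int_stable)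
      (auto simp: disjoint_family_on_def split: bool.split)
  then show ?thesis
    unfolding indep_set_def past_def future_def
    by (rule indep_sets_cong[THEN iffD1, rotated 2]) (auto split: bool.split)
qed

lemma N_vimage_past:
  assumes "j \<le> k"
  shows "N j -` A \<inter> space M \<in> past k"
proof -
  define P where "P = sigma (space M) (\<Union>i<k. increment_events i)"
  have "(\<Union>i<k. increment_events i) \<subseteq> Pow (space M)"
    using increment_events_subset by blast
  then have sets_P: "sets P = past k" and space_P: "space P = space M"
    by (simp_all add: P_def past_def sets_measure_of space_measure_of_conv)
  have increment_P: "increment i \<in> measurable P (count_space UNIV)" if "i < k" for i
  proof (rule measurableI)
    fix B :: "int set"
    have "increment i -` B \<inter> space M \<in> increment_events i"
      by (auto simp: increment_events_def)
    then show "increment i -` B \<inter> space P \<in> sets P"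
      using that unfolding sets_P space_P past_def by blast
  qed simp
  have "N j \<in> measurable P (count_space UNIV)"
    using assms
  proof (induction j)
    case 0
    have "(\<lambda>_. 0) \<in> measurable P (count_space UNIV)"
      by simp
    then show ?case
      by (rule measurable_cong[THEN iffD1, rotated]) (simp add: space_P N_0)
  next
    case (Suc j)
    \<comment> \<open>Stated for arbitrary f and g, so that measurable does not unfold increment j.\<close>
    have add: "(\<lambda>\<omega>. f \<omega> + g \<omega>) \<in> measurable P (count_space UNIV)"
      if "f \<in> measurable P (count_space UNIV)" "g \<in> measurable P (count_space UNIV)"
      for f g :: "'a \<Rightarrow> int"
      using that by measurable
    have "(\<lambda>\<omega>. N j \<omega> + increment j \<omega>) \<in> measurable P (count_space UNIV)"
      using Suc by (intro add increment_P) auto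
    then show ?case
      by simp
  qed
  from measurable_sets[OF this, of A] show ?thesis
    by (simp add: sets_P space_P)
qed

lemma sets_F: "sets (F k) = sigma_sets (space M)
    ((\<Union>j\<in>{0..k}. {N j -` A \<inter> space M | A. True}) \<union> null_sets M)"
  and space_F: "space (F k) = space M"
proof -
  have "(\<Union>j\<in>{0..k}. {N j -` A \<inter> space M | A. True}) \<union> null_sets M \<subseteq> Pow (space M)"
    by (auto dest: null_setsD2 sets.sets_into_space)
  then show "sets (F k) = sigma_sets (space M)
      ((\<Union>j\<in>{0..k}. {N j -` A \<inter> space M | A. True}) \<union> null_sets M)"
    by (simp add: nat_aug_filtration_def sets_measure_of)
  show "space (F k) = space M"
    by (simp add: nat_aug_filtration_def space_measure_of_conv)
qed

lemma filtration_subalgebra: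
  assumes "k \<le> T"
  shows "subalgebra M (F k)"
proof -
  have "(\<Union>j\<in>{0..k}. {N j -` A \<inter> space M | A. True}) \<union> null_sets M \<subseteq> events"
    using assms N_measurable by (auto intro: measurable_sets)
  then show ?thesis
    unfolding subalgebra_def sets_F space_F by (simp add: sets.sigma_sets_subset)
qed

lemma sets_F_subset: "sets (F k) \<subseteq> sigma_sets (space M) (past k \<union> null_sets M)"
  unfolding sets_F by (rule sigma_sets_mono') (auto intro: N_vimage_past)

lemma indep_F_future:
  assumes "k \<le> T"
  shows "indep_set (sets (F k)) (future k)"
proof -
  have generators: "(\<Union>i\<in>J. increment_events i) \<subseteq> Pow (space M)" for J
    using increment_events_subset by blast
  have "indep_set (sigma_sets (space M) (past k \<union> null_sets M)) (sigma_sets (space M) (future k))"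
    using assms generators
    by (intro indep_set_null_sets indep_past_future)
      (simp_all add: past_def future_def Int_stable_sigma_sets)
  then have "indep_set (sigma_sets (space M) (past k \<union> null_sets M)) (future k)"
    using generators by (simp add: future_def sigma_sets_sigma_sets_eq)
  then show ?thesis
    using sets_F_subset filtration_subalgebra[OF assms]
    unfolding indep_sets2_eq subalgebra_def by blast
qed

definition path_event :: "nat \<Rightarrow> (nat \<Rightarrow> real) \<Rightarrow> 'a set" where
  "path_event n c = {\<omega>\<in>space M. \<forall>j\<le>n. I j \<omega> = c j}"

lemma path_event_F:
  assumes "n \<le> k"
  shows "path_event n c \<in> sets (F k)"
proof -
  have "N j -` {z. (-1) powi z = c j} \<inter> space M \<in> sets (F k)" if "j \<le> n" for j
  proof -
    have "N j -` {z. (-1) powi z = c j} \<inter> space M \<in> {N j -` A \<inter> space M | A. True}"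
      by blast
    then show ?thesis
      unfolding sets_F using that assms by (intro sigma_sets.Basic UnI1 UN_I[of j]) auto
  qed
  then have "(\<Inter>j\<in>{..n}. N j -` {z. (-1) powi z = c j} \<inter> space M) \<in> sets (F k)"
    by (intro sets.finite_INT) auto
  also have "(\<Inter>j\<in>{..n}. N j -` {z. (-1) powi z = c j} \<inter> space M) = path_event n c"
    by (auto simp: path_event_def)
  finally show ?thesis .
qed

definition sign_steps :: "nat \<Rightarrow> nat \<Rightarrow> (nat \<Rightarrow> real) \<Rightarrow> 'a set" where
  "sign_steps k n c = {\<omega>\<in>space M. \<forall>i\<in>{k..<n}. (-1) powi increment i \<omega> = c (Suc i) * c i}"

lemma I_Suc: "I (Suc j) \<omega> = I j \<omega> * (-1) powi increment j \<omega>"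
  by (simp flip: power_int_add)

lemma I_Suc_eq_iff:
  assumes "I j \<omega> = s" "s = 1 \<or> s = -1"
  shows "I (Suc j) \<omega> = s' \<longleftrightarrow> (-1) powi increment j \<omega> = s' * s"
  using assms by (auto simp: I_Suc)

lemma path_event_split:
  assumes c: "\<And>j. j \<le> n \<Longrightarrow> c j = 1 \<or> c j = -1"
  shows "path_event n c = path_event (min n k) c \<inter> sign_steps k n c"
proof (intro equalityI subsetI)
  fix \<omega> assume \<omega>: "\<omega> \<in> path_event n c"
  then have "(-1) powi increment i \<omega> = c (Suc i) * c i" if "i < n" for i
    using I_Suc_eq_iff[of i \<omega> "c i" "c (Suc i)"] c[of i] that by (simp add: path_event_def)
  then show "\<omega> \<in> path_event (min n k) c \<inter> sign_steps k n c"
    using \<omega> by (auto simp: path_event_def sign_steps_def)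
next
  fix \<omega> assume \<omega>: "\<omega> \<in> path_event (min n k) c \<inter> sign_steps k n c"
  have "I j \<omega> = c j" if "j \<le> n" for j
    using that
  proof (induction j)
    case 0
    then show ?case using \<omega> by (simp add: path_event_def)
  next
    case (Suc j)
    show ?case
    proof (cases "Suc j \<le> k")
      case True
      then show ?thesis using \<omega> Suc.prems by (simp add: path_event_def)
    next
      case False
      then have "(-1) powi increment j \<omega> = c (Suc j) * c j"
        using \<omega> Suc.prems by (simp add: sign_steps_def)
      then show ?thesis
        using I_Suc_eq_iff[of j \<omega>] Suc c by simp
    qed
  qed
  then show "\<omega> \<in> path_event n c"
    using \<omega> by (simp add: path_event_def)
qed

lemma sign_steps_eq_INT:
  "k < n \<Longrightarrow> sign_steps k n c =
    (\<Inter>i\<in>{k..<n}. increment i -` {z. (-1) powi z = c (Suc i) * c i} \<inter> space M)"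
  by (auto simp: sign_steps_def)

lemma sign_steps_future:
  assumes "n \<le> T"
  shows "sign_steps k n c \<in> future k"
proof (cases "k < n")
  case True
  have "increment i -` {z. (-1) powi z = c (Suc i) * c i} \<inter> space M \<in> future k"
    if "i \<in> {k..<n}" for i
  proof -
    have "increment i -` {z. (-1) powi z = c (Suc i) * c i} \<inter> space M \<in> increment_events i"
      unfolding increment_events_def by blast
    then show ?thesis
      unfolding future_def using that assms by (intro sigma_sets.Basic UN_I[of i]) auto
  qed
  then show ?thesis
    unfolding sign_steps_eq_INT[OF True] future_def using True increment_events_subset
    by (intro sigma_sets_INTER) (auto simp: UN_subset_iff)
next
  case False
  then have "sign_steps k n c = space M"
    by (auto simp: sign_steps_def)
  then show ?thesis
    by (simp add: future_def sigma_sets_top)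
qed

lemma prob_sign_steps:
  assumes "n \<le> T" and c: "\<And>j. j \<le> n \<Longrightarrow> c j = 1 \<or> c j = -1"
  shows "prob (sign_steps k n c) = path_weight \<gamma> k n c"
proof (cases "k < n")
  case True
  have "prob (sign_steps k n c) =
      (\<Prod>i\<in>{k..<n}. prob (increment i -` {z. (-1) powi z = c (Suc i) * c i} \<inter> space M))"
    unfolding sign_steps_eq_INT[OF True] using True assms
    by (intro indep_varsD[OF indep_increments]) auto
  also have "\<dots> =
      (\<Prod>i\<in>{k..<n}. if c (Suc i) = c i then u_coef \<gamma> (Suc i) else v_coef \<gamma> (Suc i))"
  proof (rule prod.cong[OF refl])
    fix i assume i: "i \<in> {k..<n}"
    then have "i < T" using assms by auto
    note sign_law = prob_sign_poisson[OF increment_measurable[OF this] increment_poisson[OF this]]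
    have "increment i -` {z. (-1) powi z = c (Suc i) * c i} \<inter> space M =
        {\<omega>\<in>space M. (-1) powi increment i \<omega> = c (Suc i) * c i}"
      by auto
    then show "prob (increment i -` {z. (-1) powi z = c (Suc i) * c i} \<inter> space M) =
        (if c (Suc i) = c i then u_coef \<gamma> (Suc i) else v_coef \<gamma> (Suc i))"
      using sign_law c[of i] c[of "Suc i"] i by (auto simp: u_coef_def v_coef_def)
  qed
  also have "\<dots> =
      (\<Prod>j\<in>{Suc k..<Suc n}. if c j = c (j - 1) then u_coef \<gamma> j else v_coef \<gamma> j)"
    by (subst prod.shift_bounds_Suc_ivl) simp
  also have "\<dots> = path_weight \<gamma> k n c"
    by (simp add: path_weight_def atLeastLessThanSuc_atLeastAtMost)
  finally show ?thesis .
next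
  case False
  then have "sign_steps k n c = space M"
    by (auto simp: sign_steps_def)
  then show ?thesis
    using False by (simp add: path_weight_def prob_space)
qed

lemma cond_exp_path_event:
  assumes "n \<le> T" "k \<le> T" and c: "\<And>j. j \<le> n \<Longrightarrow> c j = 1 \<or> c j = -1"
  shows "AE \<omega> in M. real_cond_exp M (F k) (indicator (path_event n c)) \<omega> =
    indicator (path_event (min n k) c) \<omega> * path_weight \<gamma> k n c"
proof -
  have "AE \<omega> in M.
      real_cond_exp M (F k) (indicator (path_event (min n k) c \<inter> sign_steps k n c)) \<omega> =
      indicator (path_event (min n k) c) \<omega> * prob (sign_steps k n c)"
    using assms
    by (intro real_cond_exp_indicator_Int_indep[where B = "future k"] filtration_subalgebra
        path_event_F indep_F_future sign_steps_future) auto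
  moreover have "path_event n c = path_event (min n k) c \<inter> sign_steps k n c"
    using c by (rule path_event_split)
  ultimately show ?thesis
    using assms c by (simp add: prob_sign_steps)
qed

end

definition sign_pattern :: "nat \<Rightarrow> nat \<Rightarrow> nat \<Rightarrow> real" where
  "sign_pattern a b j = (if a \<le> j \<and> j < b then -1 else 1)"

lemma sign_pattern_agree_iff:
  assumes lm: "(l, m) \<in> index_set T" and ab: "(a, b) \<in> index_set T"
  shows "(\<forall>j\<le>min (min (min b T) k) (min m T). sign_pattern l m j = sign_pattern a b j) \<longleftrightarrow>
    k < min l a \<or> l = a \<and> (k < min m b \<or> m = b)"
proof
  assume agree: "\<forall>j\<le>min (min (min b T) k) (min m T). sign_pattern l m j = sign_pattern a b j"
  show "k < min l a \<or> l = a \<and> (k < min m b \<or> m = b)"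
  proof (rule ccontr)
    assume "\<not> ?thesis"
    then consider "l \<noteq> a" "min l a \<le> k" | "l = a" "m \<noteq> b" "min m b \<le> k"
      by linarith
    then show False
    proof cases
      case 1
      have "min l a \<le> min (min (min b T) k) (min m T)"
        using 1 lm ab by (auto simp: index_set_def)
      moreover have "sign_pattern l m (min l a) \<noteq> sign_pattern a b (min l a)"
        using 1 lm ab by (auto simp: sign_pattern_def index_set_def min_def)
      ultimately show False
        using agree by blast
    next
      case 2
      have "min m b \<le> min (min (min b T) k) (min m T)"
        using 2 lm ab by (auto simp: index_set_def)
      moreover have "sign_pattern l m (min m b) \<noteq> sign_pattern a b (min m b)"
        using 2 lm ab by (auto simp: sign_pattern_def index_set_def min_def)
      ultimately show False
        using agree by blast
    qed
  qed
qed (use lm ab in \<open>auto simp: sign_pattern_def index_set_def\<close>)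

lemma sign_pattern_agree_horizon:
  assumes "(l, m) \<in> index_set T" "(a, b) \<in> index_set T" "k \<le> T"
    and "k < min l a \<or> l = a \<and> (k < min m b \<or> m = b)"
  shows "min (min b T) k \<le> min m T"
  using assms by (auto simp: index_set_def)

lemma prod_atLeastAtMost_split_point:
  fixes f :: "nat \<Rightarrow> 'b::comm_monoid_mult"
  assumes "k < j" "j \<le> n"
  shows "(\<Prod>i\<in>{k+1..n}. f i) = (\<Prod>i\<in>{k+1..j-1}. f i) * f j * (\<Prod>i\<in>{j+1..n}. f i)"
proof -
  have split: "{k+1..n} = {k+1..j-1} \<union> insert j {j+1..n}"
    using assms by auto
  have "(\<Prod>i\<in>{k+1..n}. f i) = (\<Prod>i\<in>{k+1..j-1}. f i) * (\<Prod>i\<in>insert j {j+1..n}. f i)"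
    unfolding split by (rule prod.union_disjoint) auto
  then show ?thesis
    by (simp add: mult.assoc)
qed

lemma path_weight_two_switches:
  assumes "1 \<le> a" "a < b"
  shows "path_weight \<gamma> k b (sign_pattern a b) =
    ind (k \<ge> b) + ind (a \<le> k \<and> k < b) * (\<Prod>r\<in>{k+1..b-1}. u_coef \<gamma> r) * v_coef \<gamma> b
      + ind (k < a) * (\<Prod>r\<in>{k+1..a-1}. u_coef \<gamma> r) * v_coef \<gamma> a
          * (\<Prod>r\<in>{a+1..b-1}. u_coef \<gamma> r) * v_coef \<gamma> b"
proof -
  define f where
    "f j = (if sign_pattern a b j = sign_pattern a b (j - 1) then u_coef \<gamma> j else v_coef \<gamma> j)" for j
  have f_switch: "f a = v_coef \<gamma> a" "f b = v_coef \<gamma> b"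
    using assms by (auto simp: f_def sign_pattern_def)
  have f_run: "f j = u_coef \<gamma> j" if "j \<noteq> a" "j \<noteq> b" "1 \<le> j" for j
    using that by (auto simp: f_def sign_pattern_def)
  consider "b \<le> k" | "a \<le> k" "k < b" | "k < a"
    by linarith
  then show ?thesis
  proof cases
    case 1
    then show ?thesis
      using assms by (simp add: path_weight_def ind_def)
  next
    case 2
    have "(\<Prod>j\<in>{k+1..b}. f j) = (\<Prod>j\<in>{k+1..b-1}. f j) * f b"
      using prod_atLeastAtMost_split_point[of k b b f] 2 by simp
    also have "(\<Prod>j\<in>{k+1..b-1}. f j) = (\<Prod>j\<in>{k+1..b-1}. u_coef \<gamma> j)"
      using 2 by (intro prod.cong refl f_run) auto
    finally show ?thesis
      using 2 f_switch by (simp add: path_weight_def f_def ind_def)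
  next
    case 3
    have "(\<Prod>j\<in>{k+1..b}. f j) = (\<Prod>j\<in>{k+1..b-1}. f j) * f b"
      using prod_atLeastAtMost_split_point[of k b b f] 3 assms by simp
    also have "(\<Prod>j\<in>{k+1..b-1}. f j) = (\<Prod>j\<in>{k+1..a-1}. f j) * f a * (\<Prod>j\<in>{a+1..b-1}. f j)"
      using 3 assms by (intro prod_atLeastAtMost_split_point) auto
    also have "(\<Prod>j\<in>{k+1..a-1}. f j) = (\<Prod>j\<in>{k+1..a-1}. u_coef \<gamma> j)"
      using 3 assms by (intro prod.cong refl f_run) auto
    also have "(\<Prod>j\<in>{a+1..b-1}. f j) = (\<Prod>j\<in>{a+1..b-1}. u_coef \<gamma> j)"
      by (intro prod.cong refl f_run) auto
    finally show ?thesis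
      using 3 assms f_switch by (simp add: path_weight_def f_def ind_def)
  qed
qed

lemma path_weight_one_switch:
  assumes "1 \<le> a" "a \<le> n"
  shows "path_weight \<gamma> k n (sign_pattern a (n+1)) =
    ind (k \<ge> a) * (\<Prod>r\<in>{k+1..n}. u_coef \<gamma> r)
      + ind (k < a) * (\<Prod>r\<in>{k+1..a-1}. u_coef \<gamma> r) * v_coef \<gamma> a
          * (\<Prod>r\<in>{a+1..n}. u_coef \<gamma> r)"
proof -
  define f where "f j = (if sign_pattern a (n+1) j = sign_pattern a (n+1) (j - 1)
    then u_coef \<gamma> j else v_coef \<gamma> j)" for j
  have f_switch: "f a = v_coef \<gamma> a"
    using assms by (auto simp: f_def sign_pattern_def)
  have f_run: "f j = u_coef \<gamma> j" if "j \<noteq> a" "1 \<le> j" "j \<le> n" for j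
    using that by (auto simp: f_def sign_pattern_def)
  consider "a \<le> k" | "k < a"
    by linarith
  then show ?thesis
  proof cases
    case 1
    have "(\<Prod>j\<in>{k+1..n}. f j) = (\<Prod>j\<in>{k+1..n}. u_coef \<gamma> j)"
      using 1 by (intro prod.cong refl f_run) auto
    then show ?thesis
      using 1 by (simp add: path_weight_def f_def ind_def)
  next
    case 2
    have "(\<Prod>j\<in>{k+1..n}. f j) = (\<Prod>j\<in>{k+1..a-1}. f j) * f a * (\<Prod>j\<in>{a+1..n}. f j)"
      using 2 assms by (intro prod_atLeastAtMost_split_point) auto
    also have "(\<Prod>j\<in>{k+1..a-1}. f j) = (\<Prod>j\<in>{k+1..a-1}. u_coef \<gamma> j)"
      using 2 assms by (intro prod.cong refl f_run) auto
    also have "(\<Prod>j\<in>{a+1..n}. f j) = (\<Prod>j\<in>{a+1..n}. u_coef \<gamma> j)"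
      by (intro prod.cong refl f_run) auto
    finally show ?thesis
      using 2 f_switch by (simp add: path_weight_def f_def ind_def)
  qed
qed

context poisson_increments
begin

lemma Omega_ev_eq_path_event:
  assumes "(a, b) \<in> index_set T"
  shows "Omega_ev (space M) I T a b = path_event (min b T) (sign_pattern a b)"
proof -
  from assms consider "1 \<le> a" "a < b" "b \<le> T" | "1 \<le> a" "a \<le> T" "b = T + 1"
    | "a = T + 1" "b = T + 1"
    unfolding index_set_def by force
  then show ?thesis
  proof cases
    case 1
    then show ?thesis
      by (auto simp: Omega_ev_def path_event_def sign_pattern_def)
  next
    case 2
    then have "Omega_ev (space M) I T a b =
        {\<omega>\<in>space M. (\<forall>j<a. I j \<omega> = 1) \<and> (\<forall>j. a \<le> j \<and> j \<le> T \<longrightarrow> I j \<omega> = -1)}"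
      by (simp add: Omega_ev_def)
    also have "\<dots> = path_event (min b T) (sign_pattern a b)"
      using 2 by (auto simp: path_event_def sign_pattern_def not_le all_conj_distrib)
    finally show ?thesis .
  next
    case 3
    then show ?thesis
      by (auto simp: Omega_ev_def path_event_def sign_pattern_def)
  qed
qed

lemma indicator_path_event_on_Omega_ev:
  assumes lm: "(l, m) \<in> index_set T" and ab: "(a, b) \<in> index_set T" and "k \<le> T"
    and \<omega>: "\<omega> \<in> Omega_ev (space M) I T l m"
  shows "indicator (path_event (min (min b T) k) (sign_pattern a b)) \<omega> =
    ind (k < min l a \<or> l = a \<and> (k < min m b \<or> m = b))"
proof -
  define K where "K = min (min b T) k"
  have \<omega>_lm: "\<omega> \<in> path_event (min m T) (sign_pattern l m)"
    using \<omega> by (simp add: Omega_ev_eq_path_event[OF lm])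
  have "\<omega> \<in> path_event K (sign_pattern a b) \<longleftrightarrow>
      (\<forall>j\<le>min K (min m T). sign_pattern l m j = sign_pattern a b j)"
  proof
    assume "\<omega> \<in> path_event K (sign_pattern a b)"
    then show "\<forall>j\<le>min K (min m T). sign_pattern l m j = sign_pattern a b j"
      using \<omega>_lm by (auto simp: path_event_def)
  next
    assume agree: "\<forall>j\<le>min K (min m T). sign_pattern l m j = sign_pattern a b j"
    \<comment> \<open>\<omega> \<in> Omega_(l,m) only fixes I up to time min m T.\<close>
    then have "K \<le> min m T"
      using sign_pattern_agree_iff[OF lm ab] sign_pattern_agree_horizon[OF lm ab \<open>k \<le> T\<close>]
      by (simp add: K_def)
    then show "\<omega> \<in> path_event K (sign_pattern a b)"
      using agree \<omega>_lm by (auto simp: path_event_def min_absorb1)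
  qed
  then show ?thesis
    using sign_pattern_agree_iff[OF lm ab] by (simp add: K_def ind_def)
qed

lemma cond_exp_Omega_ev:
  assumes lm: "(l, m) \<in> index_set T" and ab: "(a, b) \<in> index_set T" and "k \<le> T"
  shows "AE \<omega> in M. \<omega> \<in> Omega_ev (space M) I T l m \<longrightarrow>
    real_cond_exp M (F k) (indicator (Omega_ev (space M) I T a b)) \<omega> =
      ind (k < min l a \<or> l = a \<and> (k < min m b \<or> m = b)) * path_weight \<gamma> k (min b T) (sign_pattern a b)"
proof -
  have "AE \<omega> in M. real_cond_exp M (F k) (indicator (path_event (min b T) (sign_pattern a b))) \<omega> =
      indicator (path_event (min (min b T) k) (sign_pattern a b)) \<omega> *
      path_weight \<gamma> k (min b T) (sign_pattern a b)"
    using \<open>k \<le> T\<close> by (intro cond_exp_path_event) (auto simp: sign_pattern_def)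
  then show ?thesis
    unfolding Omega_ev_eq_path_event[OF ab]
    by eventually_elim (auto simp: indicator_path_event_on_Omega_ev[OF lm ab \<open>k \<le> T\<close>])
qed

lemma cond_exp_Omega_two_switches:
  assumes lm: "(l, m) \<in> index_set T" and "k \<le> T" and ab: "1 \<le> a" "a < b" "b \<le> T"
  shows "AE \<omega> in M. \<omega> \<in> Omega_ev (space M) I T l m \<longrightarrow>
    real_cond_exp M (F k) (indicator (Omega_ev (space M) I T a b)) \<omega> =
      (ind (k < min l a) + ind (k \<ge> min l a) * ind (l = a) *
         (ind (k < min m b) + ind (k \<ge> min m b) * ind (m = b))) *
      (ind (k \<ge> b)
       + ind (a \<le> k \<and> k < b) * (\<Prod>r\<in>{k+1..b-1}. u_coef \<gamma> r) * v_coef \<gamma> b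
       + ind (k < a) * (\<Prod>r\<in>{k+1..a-1}. u_coef \<gamma> r) * v_coef \<gamma> a
           * (\<Prod>r\<in>{a+1..b-1}. u_coef \<gamma> r) * v_coef \<gamma> b)"
proof -
  have "ind (k < min l a \<or> l = a \<and> (k < min m b \<or> m = b)) =
      ind (k < min l a) + ind (k \<ge> min l a) * ind (l = a) *
        (ind (k < min m b) + ind (k \<ge> min m b) * ind (m = b))"
    by (auto simp: ind_def)
  moreover have "(a, b) \<in> index_set T" "min b T = b"
    using ab by (auto simp: index_set_def)
  ultimately show ?thesis
    using cond_exp_Omega_ev[OF lm _ \<open>k \<le> T\<close>, of a b] path_weight_two_switches[OF ab(1,2)] by simp
qed

lemma cond_exp_Omega_one_switch:
  assumes lm: "(l, m) \<in> index_set T" and "k \<le> T" and a: "1 \<le> a" "a \<le> T"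
  shows "AE \<omega> in M. \<omega> \<in> Omega_ev (space M) I T l m \<longrightarrow>
    real_cond_exp M (F k) (indicator (Omega_ev (space M) I T a (T+1))) \<omega> =
      (ind (k < min l a) + ind (k \<ge> min l a) * ind (l = a) * ind (k < m)) *
      (ind (k \<ge> a) * (\<Prod>r\<in>{k+1..T}. u_coef \<gamma> r)
       + ind (k < a) * (\<Prod>r\<in>{k+1..a-1}. u_coef \<gamma> r) * v_coef \<gamma> a
           * (\<Prod>r\<in>{a+1..T}. u_coef \<gamma> r))"
proof -
  have "ind (k < min l a \<or> l = a \<and> (k < min m (T+1) \<or> m = T+1)) =
      ind (k < min l a) + ind (k \<ge> min l a) * ind (l = a) * ind (k < m)"
    using lm \<open>k \<le> T\<close> by (auto simp: ind_def index_set_def)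
  moreover have "(a, T+1) \<in> index_set T"
    using a by (auto simp: index_set_def)
  ultimately show ?thesis
    using cond_exp_Omega_ev[OF lm _ \<open>k \<le> T\<close>, of a "T+1"] path_weight_one_switch[OF a] by simp
qed

lemma cond_exp_Omega_no_switch:
  assumes lm: "(l, m) \<in> index_set T" and "k \<le> T"
  shows "AE \<omega> in M. \<omega> \<in> Omega_ev (space M) I T l m \<longrightarrow>
    real_cond_exp M (F k) (indicator (Omega_ev (space M) I T (T+1) (T+1))) \<omega> =
      ind (k < l) * (\<Prod>r\<in>{k+1..T}. u_coef \<gamma> r)"
proof -
  have "ind (k < min l (T+1) \<or> l = T+1 \<and> (k < min m (T+1) \<or> m = T+1)) = ind (k < l)"
    using lm \<open>k \<le> T\<close> by (auto simp: ind_def index_set_def)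
  moreover have "(T+1, T+1) \<in> index_set T" "sign_pattern (T+1) (T+1) = (\<lambda>_. 1)"
    by (auto simp: index_set_def sign_pattern_def)
  ultimately show ?thesis
    using cond_exp_Omega_ev[OF lm _ \<open>k \<le> T\<close>, of "T+1" "T+1"] by (simp add: path_weight_def)
qed

end

theorem lemma5p9:
  fixes M :: "'a measure" and N :: "nat \<Rightarrow> 'a \<Rightarrow> int" and \<gamma> :: "nat \<Rightarrow> real"
    and T k l m :: nat and I :: "nat \<Rightarrow> 'a \<Rightarrow> real"
  assumes "prob_space M"
    and "T \<ge> 1"
    and "\<And>j. j \<le> T \<Longrightarrow> N j \<in> measurable M (count_space UNIV)"
    and "\<And>\<omega>. \<omega> \<in> space M \<Longrightarrow> N 0 \<omega> = 0"
    and "\<And>j. j < T \<Longrightarrow> \<gamma> j \<ge> 0"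
    and "prob_space.indep_vars M (\<lambda>_. count_space UNIV) (\<lambda>j \<omega>. N (Suc j) \<omega> - N j \<omega>) {0..<T}"
    and "\<And>j n. j < T \<Longrightarrow>
           measure M {\<omega> \<in> space M. N (Suc j) \<omega> - N j \<omega> = int n} = poisson_prob (\<gamma> j) n"
    and "I = (\<lambda>j \<omega>. (-1::real) powi (N j \<omega>))"
    and "k \<le> T"
    and "(l, m) \<in> index_set T"
  shows
   "(\<forall>a b. 1 \<le> a \<and> a < b \<and> b \<le> T \<longrightarrow>
      (AE \<omega> in M. \<omega> \<in> Omega_ev (space M) I T l m \<longrightarrow>
         real_cond_exp M (nat_aug_filtration M N k) (indicator (Omega_ev (space M) I T a b)) \<omega> =
           (ind (k < min l a) + ind (k \<ge> min l a) * ind (l = a) *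
              (ind (k < min m b) + ind (k \<ge> min m b) * ind (m = b))) *
           (ind (k \<ge> b)
            + ind (a \<le> k \<and> k < b) * (\<Prod>r\<in>{k+1..b-1}. u_coef \<gamma> r) * v_coef \<gamma> b
            + ind (k < a) * (\<Prod>r\<in>{k+1..a-1}. u_coef \<gamma> r) * v_coef \<gamma> a
                * (\<Prod>r\<in>{a+1..b-1}. u_coef \<gamma> r) * v_coef \<gamma> b)))
    \<and> (\<forall>a. 1 \<le> a \<and> a \<le> T \<longrightarrow>
      (AE \<omega> in M. \<omega> \<in> Omega_ev (space M) I T l m \<longrightarrow>
         real_cond_exp M (nat_aug_filtration M N k) (indicator (Omega_ev (space M) I T a (T+1))) \<omega> =
           (ind (k < min l a) + ind (k \<ge> min l a) * ind (l = a) * ind (k < m)) *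
           (ind (k \<ge> a) * (\<Prod>r\<in>{k+1..T}. u_coef \<gamma> r)
            + ind (k < a) * (\<Prod>r\<in>{k+1..a-1}. u_coef \<gamma> r) * v_coef \<gamma> a
                * (\<Prod>r\<in>{a+1..T}. u_coef \<gamma> r))))
    \<and> (AE \<omega> in M. \<omega> \<in> Omega_ev (space M) I T l m \<longrightarrow>
         real_cond_exp M (nat_aug_filtration M N k) (indicator (Omega_ev (space M) I T (T+1) (T+1))) \<omega> =
           ind (k < l) * (\<Prod>r\<in>{k+1..T}. u_coef \<gamma> r))"
proof -
  have process: "poisson_increments M N \<gamma> T"
    using assms(1,3,4,6,7) by (intro poisson_increments.intro poisson_increments_axioms.intro) auto
  show ?thesis
    unfolding assms(8)
    using poisson_increments.cond_exp_Omega_two_switches[OF process assms(10,9)]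
      poisson_increments.cond_exp_Omega_one_switch[OF process assms(10,9)]
      poisson_increments.cond_exp_Omega_no_switch[OF process assms(10,9)]
    by blast
qed

end
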